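(* Let $Y$ be an $n\times n$ matrix each of whose entries is either $0$ or an indeterminate, with distinct nonzero entries being distinct indeterminates over a field $K$, and suppose that the graph $G(Y)$ is a cycle of length $2n$. For $k\ge1$ let $J_k$ be the ideal of $k$-minors of $Y$. Then for all $k<n$, $$J_k=\Big(\prod_{v\in A}v \;:\; A \text{ an independent set of } G(Y) \text{ with } |A|=k\Big).$$
   Context: For a matrix $Z=(z_{ij})$, the graph $G(Z)$ has as vertices the nonzero entries $z_{ij}$, and two vertices $z_{ij},z_{hk}$ are adjacent iff $i=h$ or $j=k$. An independent set is a set of pairwise non-adjacent vertices. *)

theory Defs
  imports "HOL-Library.Poly_Mapping" "Jordan_Normal_Form.Determinant" "Jordan_Normal_Form.DL_Submatrix"
begin

text \<open>Polynomial ring over 'k in the indeterminates x_(i,j), indexed by matrix positions: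
  polynomials are finitely supported maps from monomials (finitely supported exponent
  vectors) to coefficients; multiplication is the convolution product of Poly_Mapping.\<close>
type_synonym 'k mpol = "((nat \<times> nat) \<Rightarrow>\<^sub>0 nat) \<Rightarrow>\<^sub>0 'k"

definition Var :: "nat \<times> nat \<Rightarrow> 'k::comm_ring_1 mpol" where
  "Var v = Poly_Mapping.single (Poly_Mapping.single v 1) 1"

definition Ymat :: "nat \<Rightarrow> (nat \<times> nat) set \<Rightarrow> 'k::comm_ring_1 mpol mat" where
  "Ymat n S = mat n n (\<lambda>(i,j). if (i,j) \<in> S then Var (i,j) else 0)"

definition G_adj :: "(nat \<times> nat) set \<Rightarrow> nat \<times> nat \<Rightarrow> nat \<times> nat \<Rightarrow> bool" where
  "G_adj S p q \<longleftrightarrow> p \<in> S \<and> q \<in> S \<and> p \<noteq> q \<and> (fst p = fst q \<or> snd p = snd q)"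

definition is_cycle_graph :: "'a set \<Rightarrow> ('a \<Rightarrow> 'a \<Rightarrow> bool) \<Rightarrow> nat \<Rightarrow> bool" where
  "is_cycle_graph V E m \<longleftrightarrow> m \<ge> 3 \<and> (\<exists>f. bij_betw f {..<m} V \<and>
     (\<forall>i<m. \<forall>j<m. E (f i) (f j) \<longleftrightarrow> (j = Suc i mod m \<or> i = Suc j mod m)))"

definition independent_set :: "(nat \<times> nat) set \<Rightarrow> (nat \<times> nat) set \<Rightarrow> bool" where
  "independent_set S A \<longleftrightarrow> A \<subseteq> S \<and> (\<forall>p\<in>A. \<forall>q\<in>A. \<not> G_adj S p q)"

definition ideal_gen :: "'a::comm_ring_1 set \<Rightarrow> 'a set" where
  "ideal_gen G = {x. \<exists>F c. finite F \<and> F \<subseteq> G \<and> x = (\<Sum>g\<in>F. c g * g)}"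

definition minors :: "nat \<Rightarrow> 'a::comm_ring_1 mat \<Rightarrow> nat \<Rightarrow> 'a set" where
  "minors n A k = {det (submatrix A I J) | I J.
      I \<subseteq> {..<n} \<and> J \<subseteq> {..<n} \<and> card I = k \<and> card J = k}"

end

theory Submission
  imports Defs
begin

text \<open>A nonzero term of the Leibniz expansion of a k-minor of Y picks k nonzero entries in
  distinct rows and columns, i.e. an independent set of G(Y) of size k with prescribed rows and
  columns. If two such terms were nonzero, their independent sets A \<noteq> B would have the same
  rows and columns, so every vertex of the symmetric difference of A and B has its row neighbour
  and its column neighbour in it as well. In a cycle these are all its neighbours, so by
  connectedness the symmetric difference is the whole cycle, which is impossible since it has at
  most 2k < 2n vertices. Hence every k-minor is 0 or, up to sign, the product over an
  independent set of size k, and conversely each such product is, up to sign, the minor on its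
  rows and columns.\<close>

lemma ideal_gen_subset:
  fixes G H :: "'a::comm_ring_1 set"
  assumes "G \<subseteq> ideal_gen H"
  shows "ideal_gen G \<subseteq> ideal_gen H"
proof -
  interpret Modules.module "(*) :: 'a \<Rightarrow> 'a \<Rightarrow> 'a"
    by unfold_locales (simp_all add: algebra_simps)
  have span: "ideal_gen X = span X" for X
    unfolding ideal_gen_def span_explicit by auto
  show ?thesis using assms unfolding span by (rule span_minimal) (rule subspace_span)
qed

lemma ideal_gen_mult:
  fixes G :: "'a::comm_ring_1 set"
  assumes "x \<in> G"
  shows "c * x \<in> ideal_gen G"
  unfolding ideal_gen_def using assms by (auto intro!: exI[of _ "{x}"])

lemma zero_in_ideal_gen: "0 \<in> ideal_gen G"
  unfolding ideal_gen_def by (auto intro!: exI[of _ "{}"])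

lemma is_cycle_graph_finite:
  assumes "is_cycle_graph V E m"
  shows "finite V" and "card V = m"
proof -
  obtain f where "bij_betw f {..<m} V"
    using assms unfolding is_cycle_graph_def by blast
  then show "finite V" and "card V = m"
    by (auto dest: bij_betw_finite bij_betw_same_card)
qed

lemma is_cycle_graph_connected:
  assumes cyc: "is_cycle_graph V E m"
    and "U \<subseteq> V" "u \<in> U"
    and closed: "\<And>x y. x \<in> U \<Longrightarrow> y \<in> V \<Longrightarrow> E x y \<Longrightarrow> y \<in> U"
  shows "U = V"
proof -
  obtain f where m: "m \<ge> 3" and bij: "bij_betw f {..<m} V"
    and adj: "\<forall>i<m. \<forall>j<m. E (f i) (f j) \<longleftrightarrow> (j = Suc i mod m \<or> i = Suc j mod m)"
    using cyc unfolding is_cycle_graph_def by blast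
  obtain a where a: "a < m" "f a = u"
    using bij \<open>u \<in> U\<close> \<open>U \<subseteq> V\<close> unfolding bij_betw_def by auto
  have walk: "f ((a + t) mod m) \<in> U" for t
  proof (induction t)
    case 0
    then show ?case using a \<open>u \<in> U\<close> by simp
  next
    case (Suc t)
    let ?i = "(a + t) mod m"
    have "Suc ?i mod m = (a + Suc t) mod m" by (simp add: mod_Suc_eq)
    moreover have "E (f ?i) (f (Suc ?i mod m))" using adj m by simp
    moreover have "f (Suc ?i mod m) \<in> V" using bij m unfolding bij_betw_def by auto
    ultimately show ?case using closed Suc.IH by metis
  qed
  have "V \<subseteq> U"
  proof
    fix v assume "v \<in> V"
    then obtain j where j: "j < m" "f j = v" using bij unfolding bij_betw_def by auto
    then have "(a + (j + m - a)) mod m = j" using a by simp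
    then show "v \<in> U" using walk[of "j + m - a"] j by simp
  qed
  then show ?thesis using \<open>U \<subseteq> V\<close> by blast
qed

lemma is_cycle_graph_at_most_two_neighbours:
  assumes cyc: "is_cycle_graph V E m"
    and "x \<in> V" "{y\<^sub>1, y\<^sub>2, y\<^sub>3} \<subseteq> V" "E x y\<^sub>1" "E x y\<^sub>2" "E x y\<^sub>3"
  shows "y\<^sub>1 = y\<^sub>2 \<or> y\<^sub>1 = y\<^sub>3 \<or> y\<^sub>2 = y\<^sub>3"
proof -
  obtain f where bij: "bij_betw f {..<m} V"
    and adj: "\<forall>i<m. \<forall>j<m. E (f i) (f j) \<longleftrightarrow> (j = Suc i mod m \<or> i = Suc j mod m)"
    using cyc unfolding is_cycle_graph_def by blast
  have "\<exists>i<m. f i = v" if "v \<in> V" for v using bij that unfolding bij_betw_def by auto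
  then obtain i j\<^sub>1 j\<^sub>2 j\<^sub>3 where idx: "i < m" "j\<^sub>1 < m" "j\<^sub>2 < m" "j\<^sub>3 < m"
    "f i = x" "f j\<^sub>1 = y\<^sub>1" "f j\<^sub>2 = y\<^sub>2" "f j\<^sub>3 = y\<^sub>3"
    using assms(2,3) by (metis insert_subset)
  have neighbour_index: "j \<in> {Suc i mod m, (i + m - 1) mod m}"
    if "j < m" "E x (f j)" for j
  proof -
    have "i = Suc j mod m \<Longrightarrow> j = (i + m - 1) mod m"
      using idx that by (auto simp: mod_Suc split: if_splits)
    moreover have "j = Suc i mod m \<or> i = Suc j mod m" using adj idx that by auto
    ultimately show ?thesis by blast
  qed
  have "j\<^sub>1 = j\<^sub>2 \<or> j\<^sub>1 = j\<^sub>3 \<or> j\<^sub>2 = j\<^sub>3"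
    using neighbour_index[of j\<^sub>1] neighbour_index[of j\<^sub>2] neighbour_index[of j\<^sub>3] idx assms(4-6)
    by auto
  then show ?thesis using idx by auto
qed

lemma independent_set_iff:
  "independent_set S A \<longleftrightarrow> A \<subseteq> S \<and> inj_on fst A \<and> inj_on snd A"
proof -
  have "(\<forall>p\<in>A. \<forall>q\<in>A. \<not> G_adj S p q) \<longleftrightarrow> inj_on fst A \<and> inj_on snd A" if "A \<subseteq> S"
    using that unfolding G_adj_def inj_on_def by blast
  then show ?thesis unfolding independent_set_def by blast
qed

lemma independent_sets_symdiff_closed:
  assumes cyc: "is_cycle_graph S (G_adj S) m"
    and A: "independent_set S A" and B: "independent_set S B"
    and rows: "fst ` A = fst ` B" and cols: "snd ` A = snd ` B"
    and x: "x \<in> A - B" and xy: "G_adj S x y"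
  shows "y \<in> B - A"
proof -
  have AS: "A \<subseteq> S" and fstA: "inj_on fst A" and sndA: "inj_on snd A"
    using A unfolding independent_set_iff by auto
  have BS: "B \<subseteq> S" using B unfolding independent_set_iff by auto
  obtain y\<^sub>1 where y\<^sub>1: "y\<^sub>1 \<in> B" "fst y\<^sub>1 = fst x"
    using rows x by (metis DiffD1 imageE imageI)
  obtain y\<^sub>2 where y\<^sub>2: "y\<^sub>2 \<in> B" "snd y\<^sub>2 = snd x"
    using cols x by (metis DiffD1 imageE imageI)
  have "y\<^sub>1 \<notin> A" using inj_onD[OF fstA, of y\<^sub>1 x] x y\<^sub>1 by auto
  moreover have "y\<^sub>2 \<notin> A" using inj_onD[OF sndA, of y\<^sub>2 x] x y\<^sub>2 by auto
  moreover have "y\<^sub>1 \<noteq> y\<^sub>2" using x y\<^sub>1 y\<^sub>2 by (metis DiffD2 prod_eqI)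
  moreover have "G_adj S x y\<^sub>1" "G_adj S x y\<^sub>2"
    using x y\<^sub>1 y\<^sub>2 AS BS unfolding G_adj_def by auto
  moreover have "x \<in> S" "{y\<^sub>1, y\<^sub>2, y} \<subseteq> S" using x y\<^sub>1 y\<^sub>2 xy AS BS unfolding G_adj_def by auto
  ultimately show ?thesis
    using is_cycle_graph_at_most_two_neighbours[OF cyc, of x y\<^sub>1 y\<^sub>2 y] xy y\<^sub>1 y\<^sub>2 by auto
qed

lemma cycle_independent_sets_eq:
  assumes cyc: "is_cycle_graph S (G_adj S) m"
    and A: "independent_set S A" and B: "independent_set S B"
    and rows: "fst ` A = fst ` B" and cols: "snd ` A = snd ` B"
    and small: "card A + card B < m"
  shows "A = B"
proof (rule ccontr)
  assume "A \<noteq> B"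
  define D where "D = (A - B) \<union> (B - A)"
  from \<open>A \<noteq> B\<close> obtain d where "d \<in> D" unfolding D_def by blast
  have "D = S"
  proof (rule is_cycle_graph_connected[OF cyc])
    show "D \<subseteq> S" using A B unfolding D_def independent_set_def by auto
    show "d \<in> D" by fact
    fix x y assume "x \<in> D" "y \<in> S" "G_adj S x y"
    then show "y \<in> D" unfolding D_def
      using independent_sets_symdiff_closed[OF cyc A B rows cols, of x y]
        independent_sets_symdiff_closed[OF cyc B A rows[symmetric] cols[symmetric], of x y]
      by blast
  qed
  have "finite S" "card S = m" using is_cycle_graph_finite[OF cyc] by auto
  then have "finite A" "finite B" using A B finite_subset unfolding independent_set_def by auto
  then have "card D \<le> card A + card B"
    unfolding D_def by (meson Diff_subset card_Un_le card_mono le_trans Un_mono add_mono)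
  then show False using \<open>D = S\<close> \<open>card S = m\<close> small by simp
qed

lemma inj_on_pick: "inj_on (pick I) {..<card I}"
  by (rule strict_mono_on_imp_inj_on) (simp add: strict_mono_on_def pick_mono_le)

lemma bij_betw_pick:
  assumes "finite I"
  shows "bij_betw (pick I) {..<card I} I"
proof -
  have "pick I ` {..<card I} \<subseteq> I" using pick_in_set_le by auto
  moreover have "card (pick I ` {..<card I}) = card I" by (simp add: card_image inj_on_pick)
  ultimately have "pick I ` {..<card I} = I" using assms by (simp add: card_subset_eq)
  then show ?thesis using inj_on_pick unfolding bij_betw_def by simp
qed

text \<open>The positions of the entries in the term of the permutation p of the Leibniz expansion of
  the minor with rows I and columns J (pick I a is the a-th element of I in increasing order).\<close>
definition transversal :: "nat set \<Rightarrow> nat set \<Rightarrow> (nat \<Rightarrow> nat) \<Rightarrow> (nat \<times> nat) set" where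
  "transversal I J p = (\<lambda>a. (pick I a, pick J (p a))) ` {..<card I}"

lemma
  assumes "finite I" "finite J" "card J = card I" and p: "p permutes {..<card I}"
  shows fst_transversal: "fst ` transversal I J p = I"
    and snd_transversal: "snd ` transversal I J p = J"
    and card_transversal: "card (transversal I J p) = card I"
    and inj_on_fst_transversal: "inj_on fst (transversal I J p)"
    and inj_on_snd_transversal: "inj_on snd (transversal I J p)"
proof -
  have "inj_on (\<lambda>a. (pick I a, pick J (p a))) {..<card I}"
    using inj_on_pick by (auto simp: inj_on_def)
  then show card: "card (transversal I J p) = card I"
    unfolding transversal_def by (simp add: card_image)
  have "fst ` transversal I J p = pick I ` {..<card I}"
    unfolding transversal_def by (simp add: image_image)
  then show rows: "fst ` transversal I J p = I"
    using bij_betw_pick[OF \<open>finite I\<close>] by (simp add: bij_betw_def)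
  have "snd ` transversal I J p = pick J ` p ` {..<card J}"
    unfolding transversal_def \<open>card J = card I\<close> by (simp add: image_image)
  then show cols: "snd ` transversal I J p = J"
    using bij_betw_pick[OF \<open>finite J\<close>] permutes_image[OF p] \<open>card J = card I\<close>
    by (simp add: bij_betw_def)
  have "finite (transversal I J p)" unfolding transversal_def by simp
  then show "inj_on fst (transversal I J p)" "inj_on snd (transversal I J p)"
    using card rows cols \<open>card J = card I\<close> by (simp_all add: eq_card_imp_inj_on)
qed

lemma transversal_inject:
  assumes "card J = card I" and p: "p permutes {..<card I}" and q: "q permutes {..<card I}"
    and eq: "transversal I J p = transversal I J q"
  shows "p = q"
proof
  fix a
  show "p a = q a"
  proof (cases "a < card I")
    case True
    then have "(pick I a, pick J (p a)) \<in> transversal I J q"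
      using eq unfolding transversal_def by auto
    then obtain b where b: "b < card I" "pick I a = pick I b" "pick J (p a) = pick J (q b)"
      unfolding transversal_def by auto
    then have "b = a" using inj_onD[OF inj_on_pick] True by auto
    moreover have "p a < card J" "q a < card J"
      using permutes_in_image[OF p] permutes_in_image[OF q] True \<open>card J = card I\<close> by auto
    ultimately show ?thesis using inj_onD[OF inj_on_pick] b by auto
  next
    case False
    then show ?thesis using permutes_not_in[OF p] permutes_not_in[OF q] by auto
  qed
qed

lemma submatrix_Ymat:
  assumes "I \<subseteq> {..<n}" "J \<subseteq> {..<n}"
  shows "submatrix (Ymat n S) I J = mat (card I) (card J)
    (\<lambda>(a, b). if (pick I a, pick J b) \<in> S then Var (pick I a, pick J b) else 0)"
proof -
  have "{i. i < n \<and> i \<in> I} = I" "{j. j < n \<and> j \<in> J} = J" using assms by auto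
  moreover have "pick I a < n" "pick J b < n" if "a < card I" "b < card J" for a b
    using that assms pick_in_set_le by blast+
  ultimately show ?thesis unfolding submatrix_def Ymat_def by (intro eq_matI) auto
qed

lemma det_submatrix_Ymat:
  assumes "I \<subseteq> {..<n}" "J \<subseteq> {..<n}" "card J = card I"
  shows "det (submatrix (Ymat n S) I J :: 'a::comm_ring_1 mpol mat) =
    (\<Sum>p | p permutes {..<card I}. signof p *
      (if transversal I J p \<subseteq> S then \<Prod>v\<in>transversal I J p. Var v else 0))"
proof -
  let ?k = "card I"
  let ?Y = "submatrix (Ymat n S) I J :: 'a mpol mat"
  have Y: "?Y = mat ?k ?k (\<lambda>(a, b). if (pick I a, pick J b) \<in> S then Var (pick I a, pick J b) else 0)"
    using submatrix_Ymat[OF assms(1,2)] assms(3) by simp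
  have "(\<Prod>a<?k. ?Y $$ (a, p a)) =
    (if transversal I J p \<subseteq> S then \<Prod>v\<in>transversal I J p. Var v else 0)"
    if p: "p permutes {..<?k}" for p
  proof -
    have entry: "?Y $$ (a, p a) =
      (if (pick I a, pick J (p a)) \<in> S then Var (pick I a, pick J (p a)) else 0)" if "a < ?k" for a
      using that permutes_in_image[OF p, of a] by (simp add: Y)
    show ?thesis
    proof (cases "transversal I J p \<subseteq> S")
      case True
      then have "(\<Prod>a<?k. ?Y $$ (a, p a)) = (\<Prod>a<?k. Var (pick I a, pick J (p a)))"
        using entry unfolding transversal_def by (intro prod.cong) auto
      also have "\<dots> = (\<Prod>v\<in>transversal I J p. Var v)"
        unfolding transversal_def
        by (rule prod.reindex[symmetric, unfolded comp_def]) (use inj_on_pick in \<open>auto simp: inj_on_def\<close>)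
      finally show ?thesis using True by simp
    next
      case False
      then obtain a where "a < ?k" "(pick I a, pick J (p a)) \<notin> S"
        unfolding transversal_def by auto
      then have "(\<Prod>a<?k. ?Y $$ (a, p a)) = 0" using entry by (intro prod_zero) auto
      then show ?thesis using False by simp
    qed
  qed
  moreover have "?Y \<in> carrier_mat ?k ?k" by (simp add: Y)
  ultimately show ?thesis by (simp add: det_def' atLeast0LessThan)
qed

lemma det_submatrix_Ymat_cycle:
  assumes cyc: "is_cycle_graph S (G_adj S) (2 * n)"
    and IJ: "I \<subseteq> {..<n}" "J \<subseteq> {..<n}" "card J = card I" "card I < n"
    and p: "p permutes {..<card I}" "transversal I J p \<subseteq> S"
  shows "det (submatrix (Ymat n S) I J :: 'a::comm_ring_1 mpol mat) =
    signof p * (\<Prod>v\<in>transversal I J p. Var v)"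
proof -
  let ?term = "\<lambda>p. signof p *
    (if transversal I J p \<subseteq> S then \<Prod>v\<in>transversal I J p. Var v else 0 :: 'a mpol)"
  have fin: "finite I" "finite J" using IJ finite_subset by blast+
  have indep: "independent_set S (transversal I J q)"
    if "q permutes {..<card I}" "transversal I J q \<subseteq> S" for q
    using that fin IJ(3) inj_on_fst_transversal inj_on_snd_transversal
    unfolding independent_set_iff by blast
  \<comment> \<open>two transversals inside S would be independent sets with the same rows and columns\<close>
  have "?term q = 0" if q: "q permutes {..<card I}" "q \<noteq> p" for q
  proof (rule ccontr)
    assume "?term q \<noteq> 0"
    then have "transversal I J q \<subseteq> S" by (auto split: if_splits)
    then have "transversal I J q = transversal I J p"
      using cycle_independent_sets_eq[OF cyc indep[OF q(1)] indep[OF p]] fin IJ q(1) p(1)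
      by (simp add: fst_transversal snd_transversal card_transversal)
    then show False using transversal_inject[OF IJ(3) q(1) p(1)] q(2) by simp
  qed
  then have "det (submatrix (Ymat n S) I J :: 'a mpol mat) = sum ?term {p}"
    unfolding det_submatrix_Ymat[OF IJ(1-3)]
    by (intro sum.mono_neutral_right) (use p finite_permutations in auto)
  then show ?thesis using p by simp
qed

lemma obtain_transversal:
  assumes "finite A" "inj_on fst A" "inj_on snd A"
  obtains p where "p permutes {..<card A}" "transversal (fst ` A) (snd ` A) p = A"
proof -
  let ?I = "fst ` A" and ?J = "snd ` A" and ?k = "card A"
  have card: "card ?I = ?k" "card ?J = ?k" using assms by (simp_all add: card_image)
  define row where "row = the_inv_into A fst"
  have row: "bij_betw row ?I A" unfolding row_def
    using assms(2) by (simp add: bij_betw_the_inv_into bij_betw_imageI)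
  have fst_row: "fst (row i) = i" if "i \<in> ?I" for i
    unfolding row_def using assms(2) that by (rule f_the_inv_into_f)
  have pick_I: "bij_betw (pick ?I) {..<?k} ?I" using bij_betw_pick[of ?I] assms(1) card by simp
  have pick_J: "bij_betw (pick ?J) {..<?k} ?J" using bij_betw_pick[of ?J] assms(1) card by simp
  \<comment> \<open>a \<mapsto> the column index of the element of A in the a-th row\<close>
  define h where "h = the_inv_into {..<?k} (pick ?J) \<circ> snd \<circ> row \<circ> pick ?I"
  have h: "bij_betw h {..<?k} {..<?k}" unfolding h_def
    using pick_I row assms(3) bij_betw_the_inv_into[OF pick_J]
    by (intro bij_betw_trans) (auto simp: bij_betw_imageI)
  define p where "p a = (if a < ?k then h a else a)" for a
  have "bij_betw p {..<?k} {..<?k}" using h by (rule bij_betw_cong[THEN iffD1, rotated]) (simp add: p_def)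
  then have p: "p permutes {..<?k}" by (rule bij_imp_permutes) (simp add: p_def)
  have "(pick ?I a, pick ?J (p a)) = row (pick ?I a)" if "a < ?k" for a
  proof -
    have "pick ?I a \<in> ?I" using pick_I that by (auto dest: bij_betwE)
    then have "row (pick ?I a) \<in> A" using row by (auto dest: bij_betwE)
    then have "pick ?J (p a) = snd (row (pick ?I a))"
      using that f_the_inv_into_f_bij_betw[OF pick_J] by (simp add: p_def h_def)
    then show ?thesis using fst_row pick_I that by (auto simp: prod_eq_iff dest: bij_betwE)
  qed
  then have "transversal ?I ?J p = row ` pick ?I ` {..<?k}"
    unfolding transversal_def card by (auto simp: image_image)
  also have "\<dots> = A" using pick_I row by (simp add: bij_betw_def)
  finally show ?thesis using p card that by simp
qed

lemma minor_in_ideal_gen_independent_sets: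
  assumes cyc: "is_cycle_graph S (G_adj S) (2 * n)" and "k < n"
    and "x \<in> minors n (Ymat n S :: 'a::comm_ring_1 mpol mat) k"
  shows "x \<in> ideal_gen {(\<Prod>v\<in>A. Var v) | A. independent_set S A \<and> card A = k}"
proof -
  obtain I J where IJ: "I \<subseteq> {..<n}" "J \<subseteq> {..<n}" "card I = k" "card J = k"
    and x: "x = det (submatrix (Ymat n S) I J)"
    using assms(3) unfolding minors_def by blast
  have fin: "finite I" "finite J" using IJ finite_subset by blast+
  show ?thesis
  proof (cases "\<exists>p. p permutes {..<k} \<and> transversal I J p \<subseteq> S")
    case True
    then obtain p where p: "p permutes {..<card I}" "transversal I J p \<subseteq> S"
      using IJ(3) by blast
    have "independent_set S (transversal I J p)" "card (transversal I J p) = k"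
      using p fin IJ inj_on_fst_transversal inj_on_snd_transversal card_transversal
      unfolding independent_set_iff by auto
    moreover have "x = signof p * (\<Prod>v\<in>transversal I J p. Var v)"
      using det_submatrix_Ymat_cycle[OF cyc IJ(1,2)] IJ \<open>k < n\<close> p x by simp
    ultimately show ?thesis by (auto intro: ideal_gen_mult)
  next
    case False
    then have "x = 0"
      unfolding x det_submatrix_Ymat[OF IJ(1,2) IJ(4)[folded IJ(3)]] IJ(3)
      by (intro sum.neutral) auto
    then show ?thesis by (simp add: zero_in_ideal_gen)
  qed
qed

lemma prod_independent_set_in_ideal_gen_minors:
  assumes "S \<subseteq> {..<n} \<times> {..<n}" and cyc: "is_cycle_graph S (G_adj S) (2 * n)" and "k < n"
    and A: "independent_set S A" "card A = k"
  shows "(\<Prod>v\<in>A. Var v) \<in> ideal_gen (minors n (Ymat n S :: 'a::comm_ring_1 mpol mat) k)"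
proof -
  have "A \<subseteq> S" "inj_on fst A" "inj_on snd A" using A unfolding independent_set_iff by auto
  moreover have "finite A" using \<open>A \<subseteq> S\<close> is_cycle_graph_finite[OF cyc] finite_subset by blast
  ultimately obtain p where p: "p permutes {..<k}" "transversal (fst ` A) (snd ` A) p = A"
    using obtain_transversal A(2) by metis
  let ?I = "fst ` A" and ?J = "snd ` A"
  have IJ: "?I \<subseteq> {..<n}" "?J \<subseteq> {..<n}" "card ?I = k" "card ?J = k"
    using assms(1) \<open>A \<subseteq> S\<close> \<open>inj_on fst A\<close> \<open>inj_on snd A\<close> A(2) by (auto simp: card_image)
  let ?minor = "det (submatrix (Ymat n S) ?I ?J) :: 'a mpol"
  have "?minor = signof p * (\<Prod>v\<in>transversal ?I ?J p. Var v)"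
    by (rule det_submatrix_Ymat_cycle[OF cyc IJ(1,2)]) (use IJ \<open>k < n\<close> p \<open>A \<subseteq> S\<close> in auto)
  then have "(\<Prod>v\<in>A. Var v) = signof p * ?minor"
    by (simp add: p(2) flip: of_int_mult mult.assoc)
  moreover have "?minor \<in> minors n (Ymat n S) k" unfolding minors_def using IJ by blast
  ultimately show ?thesis by (simp add: ideal_gen_mult)
qed

theorem lemma8p2:
  fixes n k :: nat and S :: "(nat \<times> nat) set"
  assumes "S \<subseteq> {..<n} \<times> {..<n}"
    and "is_cycle_graph S (G_adj S) (2 * n)"
    and "1 \<le> k" and "k < n"
  shows "ideal_gen (minors n (Ymat n S :: 'k::field mpol mat) k)
       = ideal_gen {(\<Prod>v\<in>A. Var v) | A. independent_set S A \<and> card A = k}"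
proof (rule subset_antisym; rule ideal_gen_subset)
  show "minors n (Ymat n S :: 'k mpol mat) k
      \<subseteq> ideal_gen {(\<Prod>v\<in>A. Var v) | A. independent_set S A \<and> card A = k}"
    using minor_in_ideal_gen_independent_sets[OF assms(2,4)] by blast
  show "{(\<Prod>v\<in>A. Var v) | A. independent_set S A \<and> card A = k}
      \<subseteq> ideal_gen (minors n (Ymat n S :: 'k mpol mat) k)"
    using prod_independent_set_in_ideal_gen_minors[OF assms(1,2,4)] by blast
qed

end
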